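(* Let $\Gamma$ be a coloring and $\Omega$ a $k$-ordering of $T_{d,k}$. For every $d$-cell $\tau$ and every cell $\rho\subseteq\tau$, the set $L_{\rho,\tau}=\{g\in G_{d,k}: \rho\subseteq g.\tau\}$ equals the subgroup $K_{[\![d]\!]\setminus\Gamma(\rho)}$. In particular, it depends only on the color of $\rho$.
   Context: Fix $d,k\ge1$, $[\![d]\!]=\{0,\dots,d\}$. $G_{d,k}=\langle\alpha_0,\dots,\alpha_d\mid\alpha_i^k=e\rangle$; for $J\subseteq[\![d]\!]$, $K_J=\langle\alpha_j:j\in J\rangle$ ($K_\emptyset=\{e\}$). The arboreal complex $T_{d,k}$: start from a single $d$-simplex $\mathcal T$, attach to each of its $(d-1)$-faces $k-1$ new $d$-simplices each using a new vertex, and inductively attach to each $(d-1)$-face created in the previous step $k-1$ new $d$-simplices each using a new vertex; $T_{d,k}$ is the union. A coloring $\Gamma$ is a map from vertices to $[\![d]\!]$ injective on each $d$-cell, extended to cells by $\Gamma(\sigma)=\{\Gamma(v):v\in\sigma\}$. A $k$-ordering $\Omega$ assigns to each $(d-1)$-cell $\sigma$ a homomorphism $\Omega_\sigma:\mathbb Z/k\mathbb Z\to\mathrm{Sym}(\delta(\sigma))$ with transitive image, $\delta(\sigma)$ the set of $d$-cells containing $\sigma$. Left action on $d$-cells: $\alpha_i^l.\tau=\Omega_\sigma(l).\tau$ where $\sigma$ is the $(d-1)$-face of $\tau$ of color $[\![d]\!]\setminus\{i\}$, extended to words letter by letter (right-most first); this is a well-defined action of $G_{d,k}$. (Equivalently,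 $L_{\rho,\tau}$ is the set of $g$ for which the cell of $g.\tau$ of color $\Gamma(\rho)$ is $\rho$.) *)

theory Defs
  imports "HOL-Algebra.Algebra"
begin

text \<open>Letters: (i, True) stands for alpha_i, (i, False) for alpha_i^(-1).
  Words are lists of letters with indices in {0..d}.\<close>

type_synonym letter = "nat \<times> bool"

definition words :: "nat \<Rightarrow> letter list set" where
  "words d = {w. \<forall>x\<in>set w. fst x \<le> d}"

inductive_set elem_step :: "nat \<Rightarrow> nat \<Rightarrow> (letter list \<times> letter list) set"
  for d k where
  cancel: "i \<le> d \<Longrightarrow> (u @ [(i, b), (i, \<not> b)] @ v, u @ v) \<in> elem_step d k"
| relator: "i \<le> d \<Longrightarrow> (u @ replicate k (i, True) @ v, u @ v) \<in> elem_step d k"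

definition word_eqv :: "nat \<Rightarrow> nat \<Rightarrow> (letter list \<times> letter list) set" where
  "word_eqv d k = {(w, w'). w \<in> words d \<and> w' \<in> words d \<and>
                     (w, w') \<in> (elem_step d k \<union> (elem_step d k)\<inverse>)\<^sup>*}"

definition G_dk :: "nat \<Rightarrow> nat \<Rightarrow> letter list set monoid" where
  "G_dk d k = \<lparr>partial_object.carrier = words d // word_eqv d k,
     monoid.mult = (\<lambda>A B. word_eqv d k `` {(SOME a. a \<in> A) @ (SOME b. b \<in> B)}),
     monoid.one = word_eqv d k `` {[]}\<rparr>"

definition gen_alpha :: "nat \<Rightarrow> nat \<Rightarrow> nat \<Rightarrow> letter list set" where
  "gen_alpha d k i = word_eqv d k `` {[(i, True)]}"

definition K_sub :: "nat \<Rightarrow> nat \<Rightarrow> nat set \<Rightarrow> letter list set set" where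
  "K_sub d k J = generate (G_dk d k) (gen_alpha d k ` J)"

text \<open>Vertices: the d+1 vertices of the initial simplex, and one new vertex for every
  attached d-simplex, named by the path of attachments that created it.\<close>
datatype vert = Root nat | New "(vert \<times> nat) list"

text \<open>Pairs (p, V): p is the attachment path (a list of (omitted vertex, copy index in 1..k-1)),
  V is the vertex set of the d-simplex. The root simplex has all its (d-1)-faces available;
  a later simplex only has the faces that were created with it (those containing its new vertex).\<close>
inductive_set arb_cells :: "nat \<Rightarrow> nat \<Rightarrow> ((vert \<times> nat) list \<times> vert set) set"
  for d k where
  root: "([], Root ` {0..d}) \<in> arb_cells d k"
| attach: "(p, V) \<in> arb_cells d k \<Longrightarrow> v \<in> V \<Longrightarrow> (p = [] \<or> v \<noteq> New p) \<Longrightarrow>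
           1 \<le> j \<Longrightarrow> j < k \<Longrightarrow>
           (p @ [(v, j)], insert (New (p @ [(v, j)])) (V - {v})) \<in> arb_cells d k"

definition dcells :: "nat \<Rightarrow> nat \<Rightarrow> vert set set" where
  "dcells d k = snd ` arb_cells d k"

definition verts :: "nat \<Rightarrow> nat \<Rightarrow> vert set" where
  "verts d k = \<Union> (dcells d k)"

definition cells :: "nat \<Rightarrow> nat \<Rightarrow> vert set set" where
  "cells d k = {\<rho>. \<rho> \<noteq> {} \<and> (\<exists>\<tau>\<in>dcells d k. \<rho> \<subseteq> \<tau>)}"

definition ridges :: "nat \<Rightarrow> nat \<Rightarrow> vert set set" where
  "ridges d k = {\<sigma>. (\<exists>\<tau>\<in>dcells d k. \<sigma> \<subseteq> \<tau>) \<and> card \<sigma> = d}"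

definition delta :: "nat \<Rightarrow> nat \<Rightarrow> vert set \<Rightarrow> vert set set" where
  "delta d k \<sigma> = {\<tau> \<in> dcells d k. \<sigma> \<subseteq> \<tau>}"

definition coloring :: "nat \<Rightarrow> nat \<Rightarrow> (vert \<Rightarrow> nat) \<Rightarrow> bool" where
  "coloring d k \<Gamma> \<longleftrightarrow> (\<forall>v\<in>verts d k. \<Gamma> v \<le> d) \<and> (\<forall>\<tau>\<in>dcells d k. inj_on \<Gamma> \<tau>)"

definition k_ordering :: "nat \<Rightarrow> nat \<Rightarrow> (vert set \<Rightarrow> int \<Rightarrow> vert set \<Rightarrow> vert set) \<Rightarrow> bool" where
  "k_ordering d k \<Omega> \<longleftrightarrow> (\<forall>\<sigma>\<in>ridges d k.
      \<Omega> \<sigma> \<in> hom (integer_mod_group k) (BijGroup (delta d k \<sigma>)) \<and>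
      (\<forall>\<tau>\<in>delta d k \<sigma>. \<forall>\<tau>'\<in>delta d k \<sigma>.
          \<exists>l\<in>carrier (integer_mod_group k). \<Omega> \<sigma> l \<tau> = \<tau>'))"

text \<open>alpha_i acts by Omega_sigma(1), alpha_i^(-1) by Omega_sigma(-1) = Omega_sigma(k-1),
  where sigma is the face of tau of color [d] - {i}.\<close>
definition act_letter :: "nat \<Rightarrow> (vert \<Rightarrow> nat) \<Rightarrow> (vert set \<Rightarrow> int \<Rightarrow> vert set \<Rightarrow> vert set)
    \<Rightarrow> letter \<Rightarrow> vert set \<Rightarrow> vert set" where
  "act_letter k \<Gamma> \<Omega> x \<tau> =
     \<Omega> {v \<in> \<tau>. \<Gamma> v \<noteq> fst x} (if snd x then 1 mod int k else (int k - 1) mod int k) \<tau>"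

text \<open>Words act letter by letter, right-most letter first.\<close>
fun act_word :: "nat \<Rightarrow> (vert \<Rightarrow> nat) \<Rightarrow> (vert set \<Rightarrow> int \<Rightarrow> vert set \<Rightarrow> vert set)
    \<Rightarrow> letter list \<Rightarrow> vert set \<Rightarrow> vert set" where
  "act_word k \<Gamma> \<Omega> [] \<tau> = \<tau>"
| "act_word k \<Gamma> \<Omega> (x # w) \<tau> = act_letter k \<Gamma> \<Omega> x (act_word k \<Gamma> \<Omega> w \<tau>)"

definition act :: "nat \<Rightarrow> (vert \<Rightarrow> nat) \<Rightarrow> (vert set \<Rightarrow> int \<Rightarrow> vert set \<Rightarrow> vert set)
    \<Rightarrow> letter list set \<Rightarrow> vert set \<Rightarrow> vert set" where
  "act k \<Gamma> \<Omega> g \<tau> = act_word k \<Gamma> \<Omega> (SOME w. w \<in> g) \<tau>"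

definition L_set :: "nat \<Rightarrow> nat \<Rightarrow> (vert \<Rightarrow> nat) \<Rightarrow> (vert set \<Rightarrow> int \<Rightarrow> vert set \<Rightarrow> vert set)
    \<Rightarrow> vert set \<Rightarrow> vert set \<Rightarrow> letter list set set" where
  "L_set d k \<Gamma> \<Omega> \<rho> \<tau> = {g \<in> carrier (G_dk d k). \<rho> \<subseteq> act k \<Gamma> \<Omega> g \<tau>}"

end

theory Submission
  imports Defs
begin

text \<open>
  Put \<open>J = [d] - \<Gamma>(\<rho>)\<close>. A generator \<open>\<alpha>\<^sub>j\<close> with \<open>j \<in> J\<close> moves a cell across a ridge
  that contains \<open>\<rho>\<close>, so \<open>K\<^sub>J \<subseteq> L\<^sub>\<rho>\<^sub>,\<^sub>\<tau>\<close>.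

  Conversely, the d-cells and ridges of \<open>T\<^sub>d\<^sub>,\<^sub>k\<close> form a tree. Every ridge lies in at least
  \<open>k\<close> cells, so each \<open>\<Omega>\<^sub>\<sigma>\<close> acts regularly, and a reduced word
  \<open>\<alpha>\<^sub>i\<^sub>1\<^sup>e\<^sup>1 \<cdots> \<alpha>\<^sub>i\<^sub>m\<^sup>e\<^sup>m\<close> (\<open>0 < e\<^sub>j < k\<close>, \<open>i\<^sub>j \<noteq> i\<^sub>j\<^sub>+\<^sub>1\<close>) moves a cell along a
  non-backtracking walk in this tree; hence \<open>G\<^sub>d\<^sub>,\<^sub>k\<close> acts freely on d-cells. Descending along
  base faces that contain \<open>\<rho>\<close> joins every cell containing \<open>\<rho>\<close>, by a word in the \<open>\<alpha>\<^sub>j\<close>,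
  \<open>j \<in> J\<close>, to the first cell of the construction that contains \<open>\<rho>\<close>. So if \<open>g.\<tau> \<supseteq> \<rho>\<close>,
  then \<open>g.\<tau> = u.\<tau>\<close> for some \<open>u \<in> K\<^sub>J\<close>, and freeness gives \<open>g = u\<close>.
\<close>

lemma arb_cells_New_memD:
  "(p, V) \<in> arb_cells d k \<Longrightarrow> New q \<in> V \<Longrightarrow> q \<noteq> [] \<and> (\<exists>r. p = q @ r)"
proof (induction arbitrary: q rule: arb_cells.induct)
  case root
  then show ?case by blast
next
  case (attach p V v j)
  show ?case
  proof (cases "q = p @ [(v, j)]")
    case False
    then have "New q \<in> V" using attach.prems by auto
    then show ?thesis using attach.IH by force
  qed simp
qed

lemma arb_cells_New_snoc_not_mem: "(p, V) \<in> arb_cells d k \<Longrightarrow> New (p @ [x]) \<notin> V"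
  using arb_cells_New_memD by fastforce

lemma arb_cells_New_mem: "(p, V) \<in> arb_cells d k \<Longrightarrow> p \<noteq> [] \<Longrightarrow> New p \<in> V"
  by (induction rule: arb_cells.induct) auto

lemma arb_cells_card: "(p, V) \<in> arb_cells d k \<Longrightarrow> finite V \<and> card V = Suc d"
proof (induction rule: arb_cells.induct)
  case root
  have "inj_on Root {0..d}" by (auto simp: inj_on_def)
  then show ?case by (simp add: card_image)
next
  case (attach p V v j)
  then show ?case using arb_cells_New_snoc_not_mem by (simp add: card_Diff_singleton)
qed

lemma arb_cells_NilD: "([], V) \<in> arb_cells d k \<Longrightarrow> V = Root ` {0..d}"
  by (cases rule: arb_cells.cases) auto

lemma arb_cells_snocE:
  assumes "(p @ [(v, j)], W) \<in> arb_cells d k"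
  obtains V where "(p, V) \<in> arb_cells d k" "v \<in> V" "p = [] \<or> v \<noteq> New p"
    "W = insert (New (p @ [(v, j)])) (V - {v})"
  using assms by (cases rule: arb_cells.cases) auto

lemma arb_cells_path_determines_cell:
  "(p, V) \<in> arb_cells d k \<Longrightarrow> (p, V') \<in> arb_cells d k \<Longrightarrow> V = V'"
proof (induction p arbitrary: V V' rule: rev_induct)
  case Nil
  then show ?case using arb_cells_NilD by blast
next
  case (snoc x p)
  obtain v j where x: "x = (v, j)" by (cases x)
  obtain W where "(p, W) \<in> arb_cells d k" "V = insert (New (p @ [(v, j)])) (W - {v})"
    using arb_cells_snocE snoc.prems(1) x by metis
  moreover obtain W' where "(p, W') \<in> arb_cells d k" "V' = insert (New (p @ [(v, j)])) (W' - {v})"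
    using arb_cells_snocE snoc.prems(2) x by metis
  ultimately show ?case using snoc.IH by metis
qed

text \<open>Each path is a prefix of the other.\<close>
lemma arb_cells_path_eqI:
  assumes "(p, V) \<in> arb_cells d k" "(q, W) \<in> arb_cells d k"
    and "p \<noteq> [] \<Longrightarrow> New p \<in> W" "q \<noteq> [] \<Longrightarrow> New q \<in> V"
  shows "p = q"
proof (cases "p = []")
  case True
  then show ?thesis using assms(1,4) arb_cells_New_memD by blast
next
  case False
  then obtain r where r: "q = p @ r" using assms(3) arb_cells_New_memD[OF assms(2)] by blast
  then have "q \<noteq> []" using False by simp
  then obtain r' where "p = q @ r'" using assms(4) arb_cells_New_memD[OF assms(1)] by blast
  with r show ?thesis by simp
qed

lemma arb_cells_cell_determines_path:
  assumes "(p, V) \<in> arb_cells d k" "(q, V) \<in> arb_cells d k"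
  shows "p = q"
  using arb_cells_path_eqI[OF assms] arb_cells_New_mem assms by blast

lemma arb_cells_eqI:
  assumes "(p, V) \<in> arb_cells d k" "(q, W) \<in> arb_cells d k"
    and "p \<noteq> [] \<Longrightarrow> New p \<in> W" "q \<noteq> [] \<Longrightarrow> New q \<in> V"
  shows "V = W"
  using arb_cells_path_eqI[OF assms] assms(1,2) arb_cells_path_determines_cell by blast

definition cell_path :: "nat \<Rightarrow> nat \<Rightarrow> vert set \<Rightarrow> (vert \<times> nat) list" where
  "cell_path d k V = (THE p. (p, V) \<in> arb_cells d k)"

lemma cell_path_eq: "(p, V) \<in> arb_cells d k \<Longrightarrow> cell_path d k V = p"
  unfolding cell_path_def using arb_cells_cell_determines_path by blast

lemma arb_cells_cell_path: "\<tau> \<in> dcells d k \<Longrightarrow> (cell_path d k \<tau>, \<tau>) \<in> arb_cells d k"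
  unfolding dcells_def using cell_path_eq by fastforce

lemma arb_cells_dcells: "(p, V) \<in> arb_cells d k \<Longrightarrow> V \<in> dcells d k"
  unfolding dcells_def by (metis image_eqI snd_conv)

lemma dcells_card: "\<tau> \<in> dcells d k \<Longrightarrow> finite \<tau> \<and> card \<tau> = Suc d"
  using arb_cells_cell_path arb_cells_card by blast

section \<open>The group \<open>G\<^sub>d\<^sub>,\<^sub>k\<close>\<close>

abbreviation elem_conv :: "nat \<Rightarrow> nat \<Rightarrow> (letter list \<times> letter list) set" where
  "elem_conv d k \<equiv> (elem_step d k \<union> (elem_step d k)\<inverse>)\<^sup>*"

lemma elem_step_words:
  "(w, w') \<in> elem_step d k \<Longrightarrow> w \<in> words d \<longleftrightarrow> w' \<in> words d \<and> (\<forall>x\<in>set w. fst x \<le> d)"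
  by (cases rule: elem_step.cases) (auto simp: words_def)

lemma elem_conv_words: "(w, w') \<in> elem_conv d k \<Longrightarrow> w \<in> words d \<Longrightarrow> w' \<in> words d"
proof (induction rule: rtrancl_induct)
  case (step y z)
  then consider "(y, z) \<in> elem_step d k" | "(z, y) \<in> elem_step d k" by blast
  then show ?case
  proof cases
    case 1
    then show ?thesis using elem_step_words step by blast
  next
    case 2
    then show ?thesis using step by (cases rule: elem_step.cases) (auto simp: words_def)
  qed
qed simp

lemma elem_conv_sym: "(w, w') \<in> elem_conv d k \<Longrightarrow> (w', w) \<in> elem_conv d k"
proof -
  have "(elem_step d k \<union> (elem_step d k)\<inverse>)\<inverse> = elem_step d k \<union> (elem_step d k)\<inverse>" by auto
  then show "(w, w') \<in> elem_conv d k \<Longrightarrow> (w', w) \<in> elem_conv d k"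
    by (metis converse_iff rtrancl_converse)
qed

lemma equiv_word_eqv: "equiv (words d) (word_eqv d k)"
proof (rule equivI)
  show "refl_on (words d) (word_eqv d k)" unfolding refl_on_def word_eqv_def by auto
  show "word_eqv d k \<subseteq> words d \<times> words d" unfolding word_eqv_def by auto
  show "sym (word_eqv d k)" unfolding word_eqv_def using elem_conv_sym by (auto intro: symI)
  show "trans (word_eqv d k)" unfolding word_eqv_def by (auto intro: transI rtrancl_trans)
qed

lemma word_eqvD: "(w, w') \<in> word_eqv d k \<Longrightarrow> w \<in> words d \<and> w' \<in> words d \<and> (w, w') \<in> elem_conv d k"
  unfolding word_eqv_def by simp

lemma word_eqv_refl: "w \<in> words d \<Longrightarrow> (w, w) \<in> word_eqv d k"
  unfolding word_eqv_def by simp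

lemma word_eqv_sym: "(w, w') \<in> word_eqv d k \<Longrightarrow> (w', w) \<in> word_eqv d k"
  using equiv_word_eqv unfolding equiv_def sym_def by blast

lemma word_eqv_trans:
  "(w, w') \<in> word_eqv d k \<Longrightarrow> (w', w'') \<in> word_eqv d k \<Longrightarrow> (w, w'') \<in> word_eqv d k"
  using equiv_word_eqv unfolding equiv_def trans_def by blast

lemma elem_step_word_eqv: "(w, w') \<in> elem_step d k \<Longrightarrow> w \<in> words d \<Longrightarrow> (w, w') \<in> word_eqv d k"
  unfolding word_eqv_def using elem_conv_words by blast

lemma append_words: "a \<in> words d \<Longrightarrow> b \<in> words d \<Longrightarrow> a @ b \<in> words d"
  by (auto simp: words_def)

lemma elem_step_append:
  assumes "(x, y) \<in> elem_step d k"
  shows "(a @ x @ b, a @ y @ b) \<in> elem_step d k"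
  using assms
proof (cases rule: elem_step.cases)
  case (cancel i u c v)
  then show ?thesis using elem_step.cancel[of i d "a @ u" c "v @ b" k] by simp
next
  case (relator i u v)
  then show ?thesis using elem_step.relator[of i d "a @ u" k "v @ b"] by simp
qed

lemma elem_conv_append:
  "(x, y) \<in> elem_conv d k \<Longrightarrow> (a @ x @ b, a @ y @ b) \<in> elem_conv d k"
proof (induction rule: rtrancl_induct)
  case (step y z)
  then have "(a @ y @ b, a @ z @ b) \<in> elem_step d k \<union> (elem_step d k)\<inverse>"
    using elem_step_append by blast
  with step.IH show ?case by (rule rtrancl_into_rtrancl)
qed simp

lemma word_eqv_append:
  assumes "(a, a') \<in> word_eqv d k" "(b, b') \<in> word_eqv d k"
  shows "(a @ b, a' @ b') \<in> word_eqv d k"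
proof -
  have "(a @ b, a' @ b) \<in> elem_conv d k" "(a' @ b, a' @ b') \<in> elem_conv d k"
    using elem_conv_append[of _ _ d k "[]"] elem_conv_append[of _ _ d k _ "[]"] word_eqvD assms by simp_all
  then have "(a @ b, a' @ b') \<in> elem_conv d k" by (rule rtrancl_trans)
  moreover have "a @ b \<in> words d" using assms word_eqvD append_words by blast
  ultimately show ?thesis unfolding word_eqv_def using elem_conv_words by blast
qed

definition word_class :: "nat \<Rightarrow> nat \<Rightarrow> letter list \<Rightarrow> letter list set" where
  "word_class d k w = word_eqv d k `` {w}"

lemma word_class_eq: "(w, w') \<in> word_eqv d k \<Longrightarrow> word_class d k w = word_class d k w'"
  unfolding word_class_def using equiv_class_eq[OF equiv_word_eqv] by blast

lemma some_word_class: "w \<in> words d \<Longrightarrow> (w, SOME x. x \<in> word_class d k w) \<in> word_eqv d k"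
  using someI[of "\<lambda>x. x \<in> word_class d k w" w] word_eqv_refl unfolding word_class_def by blast

lemma carrier_G_dk: "carrier (G_dk d k) = word_class d k ` words d"
  unfolding G_dk_def word_class_def quotient_def by auto

lemma one_G_dk: "\<one>\<^bsub>G_dk d k\<^esub> = word_class d k []"
  unfolding G_dk_def word_class_def by simp

lemma mult_G_dk:
  assumes "a \<in> words d" "b \<in> words d"
  shows "word_class d k a \<otimes>\<^bsub>G_dk d k\<^esub> word_class d k b = word_class d k (a @ b)"
proof -
  have "word_class d k a \<otimes>\<^bsub>G_dk d k\<^esub> word_class d k b =
      word_class d k ((SOME x. x \<in> word_class d k a) @ (SOME y. y \<in> word_class d k b))"
    unfolding G_dk_def word_class_def by simp
  also have "\<dots> = word_class d k (a @ b)"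
    using word_class_eq word_eqv_append word_eqv_sym some_word_class assms by metis
  finally show ?thesis .
qed

definition inv_word :: "letter list \<Rightarrow> letter list" where
  "inv_word w = rev (map (\<lambda>(i, b). (i, \<not> b)) w)"

lemma inv_word_words: "w \<in> words d \<Longrightarrow> inv_word w \<in> words d"
  unfolding inv_word_def words_def by auto

lemma inv_word_inv_word: "inv_word (inv_word w) = w"
  unfolding inv_word_def by (simp add: rev_map comp_def case_prod_beta)

lemma inv_word_append_word_eqv: "w \<in> words d \<Longrightarrow> (inv_word w @ w, []) \<in> word_eqv d k"
proof (induction w)
  case Nil
  then show ?case using word_eqv_refl by (simp add: inv_word_def words_def)
next
  case (Cons x w)
  obtain i b where x: "x = (i, b)" by (cases x)
  have w: "w \<in> words d" "i \<le> d" using Cons.prems x by (auto simp: words_def)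
  have "inv_word (x # w) @ x # w = inv_word w @ [(i, \<not> b), (i, \<not> \<not> b)] @ w"
    using x by (simp add: inv_word_def)
  moreover have "inv_word w @ [(i, \<not> b), (i, \<not> \<not> b)] @ w \<in> words d"
    using inv_word_words[OF w(1)] w by (auto simp: words_def)
  then have "(inv_word w @ [(i, \<not> b), (i, \<not> \<not> b)] @ w, inv_word w @ w) \<in> word_eqv d k"
    using elem_step_word_eqv[OF elem_step.cancel[OF w(2), of "inv_word w" "\<not> b" w k]] by blast
  ultimately show ?case using word_eqv_trans Cons.IH[OF w(1)] by metis
qed

lemma word_append_inv_word_eqv: "w \<in> words d \<Longrightarrow> (w @ inv_word w, []) \<in> word_eqv d k"
  using inv_word_append_word_eqv[OF inv_word_words] inv_word_inv_word by metis

lemma word_class_in_carrier: "w \<in> words d \<Longrightarrow> word_class d k w \<in> carrier (G_dk d k)"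
  unfolding carrier_G_dk by (rule imageI)

lemma inv_word_mult_G_dk:
  "a \<in> words d \<Longrightarrow> word_class d k (inv_word a) \<otimes>\<^bsub>G_dk d k\<^esub> word_class d k a = \<one>\<^bsub>G_dk d k\<^esub>"
  using mult_G_dk[OF inv_word_words] word_class_eq[OF inv_word_append_word_eqv] one_G_dk by metis

lemma group_G_dk: "group (G_dk d k)"
proof (rule groupI)
  fix x y z
  assume "x \<in> carrier (G_dk d k)" "y \<in> carrier (G_dk d k)" "z \<in> carrier (G_dk d k)"
  then obtain a b c where abc: "a \<in> words d" "b \<in> words d" "c \<in> words d"
    "x = word_class d k a" "y = word_class d k b" "z = word_class d k c"
    unfolding carrier_G_dk by blast
  show "x \<otimes>\<^bsub>G_dk d k\<^esub> y \<in> carrier (G_dk d k)"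
    using abc mult_G_dk word_class_in_carrier append_words by simp
  show "x \<otimes>\<^bsub>G_dk d k\<^esub> y \<otimes>\<^bsub>G_dk d k\<^esub> z = x \<otimes>\<^bsub>G_dk d k\<^esub> (y \<otimes>\<^bsub>G_dk d k\<^esub> z)"
    using abc mult_G_dk append_words by simp
next
  show "\<one>\<^bsub>G_dk d k\<^esub> \<in> carrier (G_dk d k)"
    unfolding one_G_dk by (rule word_class_in_carrier) (simp add: words_def)
next
  fix x assume "x \<in> carrier (G_dk d k)"
  then obtain a where a: "a \<in> words d" "x = word_class d k a" unfolding carrier_G_dk by blast
  show "\<one>\<^bsub>G_dk d k\<^esub> \<otimes>\<^bsub>G_dk d k\<^esub> x = x"
    using a one_G_dk mult_G_dk[of "[]" d a k] by (simp add: words_def)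
  show "\<exists>y\<in>carrier (G_dk d k). y \<otimes>\<^bsub>G_dk d k\<^esub> x = \<one>\<^bsub>G_dk d k\<^esub>"
    using a inv_word_mult_G_dk word_class_in_carrier[OF inv_word_words] by blast
qed

lemma inv_G_dk: "a \<in> words d \<Longrightarrow> inv\<^bsub>G_dk d k\<^esub> (word_class d k a) = word_class d k (inv_word a)"
  by (rule group.inv_equality[OF group_G_dk inv_word_mult_G_dk word_class_in_carrier
        word_class_in_carrier[OF inv_word_words]])

definition words_over :: "nat set \<Rightarrow> letter list set" where
  "words_over J = {w. \<forall>x\<in>set w. fst x \<in> J}"

lemma words_over_subset: "J \<subseteq> {0..d} \<Longrightarrow> words_over J \<subseteq> words d"
  unfolding words_over_def words_def by auto

lemma word_class_letter_in_K_sub: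
  assumes "J \<subseteq> {0..d}" "i \<in> J"
  shows "word_class d k [(i, b)] \<in> K_sub d k J"
proof -
  have gen: "word_class d k [(i, True)] \<in> gen_alpha d k ` J"
    using assms(2) unfolding gen_alpha_def word_class_def by blast
  have "[(i, True)] \<in> words d" using assms by (auto simp: words_def)
  then have "inv\<^bsub>G_dk d k\<^esub> (word_class d k [(i, True)]) = word_class d k [(i, False)]"
    using inv_G_dk by (simp add: inv_word_def)
  moreover have "word_class d k [(i, True)] \<in> K_sub d k J"
    using gen unfolding K_sub_def by (rule generate.incl)
  moreover have "inv\<^bsub>G_dk d k\<^esub> (word_class d k [(i, True)]) \<in> K_sub d k J"
    using gen unfolding K_sub_def by (rule generate.inv)
  ultimately show ?thesis by (cases b) simp_all
qed

lemma K_sub_subset_word_class: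
  assumes J: "J \<subseteq> {0..d}"
  shows "K_sub d k J \<subseteq> word_class d k ` words_over J"
proof
  fix g assume "g \<in> K_sub d k J"
  then show "g \<in> word_class d k ` words_over J" unfolding K_sub_def
  proof (induction rule: generate.induct)
    case one
    show ?case using one_G_dk by (auto simp: words_over_def)
  next
    case (incl h)
    then show ?case unfolding gen_alpha_def word_class_def words_over_def by force
  next
    case (inv h)
    then obtain i where i: "i \<in> J" "h = word_class d k [(i, True)]"
      unfolding gen_alpha_def word_class_def by blast
    then have "inv\<^bsub>G_dk d k\<^esub> h = word_class d k [(i, False)]"
      using inv_G_dk J by (auto simp: inv_word_def words_def)
    then show ?case using i by (auto simp: words_over_def)
  next
    case (eng h1 h2)
    then obtain a b where "a \<in> words_over J" "b \<in> words_over J"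
      "h1 = word_class d k a" "h2 = word_class d k b"
      by blast
    moreover have "a @ b \<in> words_over J" if "a \<in> words_over J" "b \<in> words_over J" for a b
      using that by (auto simp: words_over_def)
    ultimately show ?case using mult_G_dk words_over_subset[OF J] by blast
  qed
qed

lemma word_class_words_over_subset_K_sub:
  assumes J: "J \<subseteq> {0..d}"
  shows "word_class d k ` words_over J \<subseteq> K_sub d k J"
proof (rule image_subsetI)
  fix w assume "w \<in> words_over J"
  then show "word_class d k w \<in> K_sub d k J"
  proof (induction w)
    case Nil
    show ?case unfolding K_sub_def using one_G_dk generate.one by metis
  next
    case (Cons x w)
    have x: "fst x \<in> J" "[x] \<in> words d" and w: "w \<in> words_over J" "w \<in> words d"
      using Cons.prems J words_over_subset[OF J] by (auto simp: words_over_def words_def)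
    have "word_class d k [x] \<in> K_sub d k J"
      using word_class_letter_in_K_sub[OF J x(1)] by (metis prod.collapse)
    then show ?case
      using mult_G_dk[OF x(2) w(2)] Cons.IH[OF w(1)] generate.eng unfolding K_sub_def by fastforce
  qed
qed

lemma K_sub_eq: "J \<subseteq> {0..d} \<Longrightarrow> K_sub d k J = word_class d k ` words_over J"
  by (rule equalityI[OF K_sub_subset_word_class word_class_words_over_subset_K_sub])

lemma inverse_letter_word_eqv:
  assumes "0 < k" "i \<le> d"
  shows "([(i, False)], replicate (k - 1) (i, True)) \<in> word_eqv d k"
proof -
  define a where "a = [(i, False)] @ replicate k (i, True) @ []"
  have a: "a \<in> words d" unfolding a_def words_def using assms(2) by auto
  have "(a, [(i, False)] @ []) \<in> elem_step d k"
    unfolding a_def by (rule elem_step.relator[OF assms(2)])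
  then have "(a, [(i, False)]) \<in> word_eqv d k" using elem_step_word_eqv[OF _ a] by simp
  moreover have "a = [] @ [(i, False), (i, \<not> False)] @ replicate (k - 1) (i, True)"
    unfolding a_def using assms(1) by (cases k) auto
  then have "(a, [] @ replicate (k - 1) (i, True)) \<in> elem_step d k"
    using elem_step.cancel[OF assms(2)] by metis
  then have "(a, replicate (k - 1) (i, True)) \<in> word_eqv d k" using elem_step_word_eqv[OF _ a] by simp
  ultimately show ?thesis using word_eqv_trans word_eqv_sym by blast
qed

lemma positive_word_eqv:
  assumes "0 < k" "w \<in> words d"
  shows "\<exists>w'. (w, w') \<in> word_eqv d k \<and> (\<forall>x\<in>set w'. snd x \<and> fst x \<le> d)"
  using assms(2)
proof (induction w)
  case Nil
  have "([], []) \<in> word_eqv d k" by (rule word_eqv_refl) (simp add: words_def)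
  then show ?case by auto
next
  case (Cons x w)
  obtain i b where x: "x = (i, b)" by (cases x)
  have w: "w \<in> words d" "i \<le> d" using Cons.prems x by (auto simp: words_def)
  obtain w' where w': "(w, w') \<in> word_eqv d k" "\<forall>x\<in>set w'. snd x \<and> fst x \<le> d"
    using Cons.IH[OF w(1)] by blast
  show ?case
  proof (cases b)
    case True
    have "([x], [x]) \<in> word_eqv d k" using word_eqv_refl w x by (simp add: words_def)
    then have "([x] @ w, [x] @ w') \<in> word_eqv d k" using word_eqv_append w'(1) by blast
    then show ?thesis using w'(2) x True w(2) by (intro exI[of _ "x # w'"]) simp
  next
    case False
    have "([x] @ w, replicate (k - 1) (i, True) @ w') \<in> word_eqv d k"
      using word_eqv_append[OF inverse_letter_word_eqv[OF assms(1) w(2)] w'(1)] x False by simp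
    then show ?thesis using w'(2) w(2) by (intro exI[of _ "replicate (k - 1) (i, True) @ w'"]) auto
  qed
qed

definition block_word :: "(nat \<times> nat) list \<Rightarrow> letter list" where
  "block_word bs = concat (map (\<lambda>(i, e). replicate e (i, True)) bs)"

lemma block_word_Nil [simp]: "block_word [] = []"
  unfolding block_word_def by simp

lemma block_word_Cons [simp]: "block_word ((i, e) # bs) = replicate e (i, True) @ block_word bs"
  unfolding block_word_def by simp

lemma block_word_append: "block_word (bs @ cs) = block_word bs @ block_word cs"
  unfolding block_word_def by simp

lemma block_infix_block_word:
  assumes "(i, e) \<in> set bs"
  obtains u v where "block_word bs = u @ replicate e (i, True) @ v"
proof -
  obtain xs ys where "bs = xs @ (i, e) # ys" using split_list[OF assms] by blast
  then have "block_word bs = block_word xs @ replicate e (i, True) @ block_word ys"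
    by (simp add: block_word_append)
  then show ?thesis using that by blast
qed

lemma positive_word_blocks:
  assumes "\<forall>x\<in>set w. snd x"
  shows "\<exists>bs. w = block_word bs \<and> distinct_adj (map fst bs) \<and> (\<forall>b\<in>set bs. 0 < snd b)"
  using assms
proof (induction w)
  case Nil
  show ?case by (rule exI[of _ "[]"]) simp
next
  case (Cons x w)
  obtain i where x: "x = (i, True)" using Cons.prems by (cases x) auto
  obtain bs where bs: "w = block_word bs" "distinct_adj (map fst bs)" "\<forall>b\<in>set bs. 0 < snd b"
    using Cons by auto
  show ?case
  proof (cases "bs \<noteq> [] \<and> fst (hd bs) = i")
    case True
    then obtain e r where "bs = (i, e) # r" by (cases bs) auto
    then show ?thesis
      using bs x by (intro exI[of _ "(i, Suc e) # r"]) (auto simp: distinct_adj_Cons)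
  next
    case False
    then show ?thesis
      using bs x by (intro exI[of _ "(i, 1) # bs"]) (auto simp: distinct_adj_Cons hd_map)
  qed
qed

lemma carrier_BijGroup: "carrier (BijGroup S) = Bij S"
  unfolding BijGroup_def by simp

lemma mult_BijGroup: "g \<in> Bij S \<Longrightarrow> f \<in> Bij S \<Longrightarrow> g \<otimes>\<^bsub>BijGroup S\<^esub> f = compose S g f"
  unfolding BijGroup_def by simp

lemma one_BijGroup: "\<one>\<^bsub>BijGroup S\<^esub> = (\<lambda>x\<in>S. x)"
  unfolding BijGroup_def by simp

locale arboreal_action =
  fixes d k :: nat and \<Gamma> :: "vert \<Rightarrow> nat"
    and \<Omega> :: "vert set \<Rightarrow> int \<Rightarrow> vert set \<Rightarrow> vert set"
  assumes k_pos: "1 \<le> k"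
    and coloring: "coloring d k \<Gamma>" and k_ordering: "k_ordering d k \<Omega>"
begin

definition face :: "vert set \<Rightarrow> nat \<Rightarrow> vert set" where
  "face \<tau> i = {v \<in> \<tau>. \<Gamma> v \<noteq> i}"

lemma inj_on_coloring: "\<tau> \<in> dcells d k \<Longrightarrow> inj_on \<Gamma> \<tau>"
  using coloring unfolding coloring_def by blast

lemma coloring_image: assumes "\<tau> \<in> dcells d k" shows "\<Gamma> ` \<tau> = {0..d}"
proof -
  have "\<tau> \<subseteq> verts d k" using assms unfolding verts_def by blast
  then have "\<Gamma> ` \<tau> \<subseteq> {0..d}" using coloring unfolding coloring_def by auto
  moreover have "card (\<Gamma> ` \<tau>) = Suc d"
    using card_image[OF inj_on_coloring[OF assms]] dcells_card[OF assms] by simp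
  ultimately show ?thesis by (simp add: card_subset_eq)
qed

lemma face_eq_Diff:
  assumes "\<tau> \<in> dcells d k" "i \<le> d"
  obtains w where "w \<in> \<tau>" "\<Gamma> w = i" "face \<tau> i = \<tau> - {w}"
proof -
  obtain w where w: "w \<in> \<tau>" "\<Gamma> w = i" using coloring_image[OF assms(1)] assms(2) by force
  then have "face \<tau> i = \<tau> - {w}"
    using inj_on_coloring[OF assms(1)] unfolding face_def inj_on_def by auto
  with w that show ?thesis by blast
qed

lemma face_of_vertex:
  assumes "\<tau> \<in> dcells d k" "w \<in> \<tau>"
  shows "face \<tau> (\<Gamma> w) = \<tau> - {w}"
  using assms inj_on_coloring unfolding face_def inj_on_def by auto

lemma finite_face: "\<tau> \<in> dcells d k \<Longrightarrow> finite (face \<tau> i)"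
  using dcells_card unfolding face_def by simp

lemma card_face:
  assumes "\<tau> \<in> dcells d k" "i \<le> d"
  shows "card (face \<tau> i) = d"
proof -
  obtain w where "w \<in> \<tau>" "face \<tau> i = \<tau> - {w}" using face_eq_Diff[OF assms] .
  then show ?thesis using dcells_card[OF assms(1)] by simp
qed

lemma face_in_ridges: "\<tau> \<in> dcells d k \<Longrightarrow> i \<le> d \<Longrightarrow> face \<tau> i \<in> ridges d k"
  using card_face unfolding ridges_def face_def by blast

lemma mem_delta_face: "\<tau> \<in> dcells d k \<Longrightarrow> \<tau> \<in> delta d k (face \<tau> i)"
  unfolding delta_def face_def by blast

lemma face_of_mem_delta:
  assumes "\<tau> \<in> dcells d k" "i \<le> d" "\<tau>' \<in> delta d k (face \<tau> i)"
  shows "face \<tau>' i = face \<tau> i"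
proof -
  have \<tau>': "\<tau>' \<in> dcells d k" "face \<tau> i \<subseteq> \<tau>'" using assms(3) unfolding delta_def by auto
  then have "face \<tau> i \<subseteq> face \<tau>' i" unfolding face_def by auto
  moreover have "card (face \<tau> i) = card (face \<tau>' i)" using card_face assms \<tau>' by simp
  ultimately show ?thesis using finite_face[OF \<tau>'(1)] card_subset_eq by metis
qed

lemma face_neq:
  assumes "\<tau> \<in> dcells d k" "j \<le> d" "i \<noteq> j"
  shows "face \<tau> i \<noteq> face \<tau> j"
proof -
  obtain w where "w \<in> \<tau>" "\<Gamma> w = j" "face \<tau> j = \<tau> - {w}" using face_eq_Diff assms(1,2) by blast
  then have "w \<in> face \<tau> i - face \<tau> j" unfolding face_def using assms(3) by simp
  then show ?thesis by blast
qed

lemma ridge_eq_face: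
  assumes "\<sigma> \<in> ridges d k" "\<tau> \<in> delta d k \<sigma>"
  obtains i where "i \<le> d" "\<sigma> = face \<tau> i"
proof -
  have \<tau>: "\<tau> \<in> dcells d k" "\<sigma> \<subseteq> \<tau>" using assms(2) unfolding delta_def by auto
  have "finite \<tau>" "card \<tau> = Suc d" "card \<sigma> = d" using dcells_card[OF \<tau>(1)] assms(1) unfolding ridges_def by auto
  then have "card (\<tau> - \<sigma>) = 1" using card_Diff_subset[OF finite_subset \<tau>(2)] \<tau>(2) by simp
  then obtain w where "\<tau> - \<sigma> = {w}" by (meson card_1_singletonE)
  then have "\<sigma> = \<tau> - {w}" "w \<in> \<tau>" using \<tau>(2) by auto
  moreover have "\<Gamma> w \<le> d" using coloring_image[OF \<tau>(1)] \<open>w \<in> \<tau>\<close> by auto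
  ultimately show ?thesis using that face_of_vertex[OF \<tau>(1)] by simp
qed

lemma carrier_integer_mod_group_k: "carrier (integer_mod_group k) = {0..<int k}"
  using k_pos carrier_integer_mod_group[of k] by auto

lemma group_hom_\<Omega>:
  assumes "\<sigma> \<in> ridges d k"
  shows "group_hom (integer_mod_group k) (BijGroup (delta d k \<sigma>)) (\<Omega> \<sigma>)"
proof -
  have "\<Omega> \<sigma> \<in> hom (integer_mod_group k) (BijGroup (delta d k \<sigma>))"
    using k_ordering assms unfolding k_ordering_def by blast
  then show ?thesis by (intro group_hom.intro group_hom_axioms.intro group_BijGroup group_integer_mod_group)
qed

lemma \<Omega>_Bij: "\<sigma> \<in> ridges d k \<Longrightarrow> l \<in> {0..<int k} \<Longrightarrow> \<Omega> \<sigma> l \<in> Bij (delta d k \<sigma>)"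
  using group_hom.hom_closed[OF group_hom_\<Omega>, of \<sigma> l] by (simp add: carrier_integer_mod_group_k carrier_BijGroup)

lemma \<Omega>_mem_delta:
  "\<sigma> \<in> ridges d k \<Longrightarrow> \<tau> \<in> delta d k \<sigma> \<Longrightarrow> l \<in> {0..<int k} \<Longrightarrow> \<Omega> \<sigma> l \<tau> \<in> delta d k \<sigma>"
  using \<Omega>_Bij Bij_imp_funcset by blast

lemma \<Omega>_add:
  assumes "\<sigma> \<in> ridges d k" "\<tau> \<in> delta d k \<sigma>" "l1 \<in> {0..<int k}" "l2 \<in> {0..<int k}"
  shows "\<Omega> \<sigma> l1 (\<Omega> \<sigma> l2 \<tau>) = \<Omega> \<sigma> ((l1 + l2) mod int k) \<tau>"
proof -
  have "\<Omega> \<sigma> ((l1 + l2) mod int k) = \<Omega> \<sigma> l1 \<otimes>\<^bsub>BijGroup (delta d k \<sigma>)\<^esub> \<Omega> \<sigma> l2"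
    using group_hom.hom_mult[OF group_hom_\<Omega>[OF assms(1)]] assms(3,4) carrier_integer_mod_group_k by simp
  also have "\<dots> = compose (delta d k \<sigma>) (\<Omega> \<sigma> l1) (\<Omega> \<sigma> l2)"
    using mult_BijGroup \<Omega>_Bij assms by blast
  finally show ?thesis using assms(2) by (simp add: compose_eq)
qed

lemma \<Omega>_zero: "\<sigma> \<in> ridges d k \<Longrightarrow> \<tau> \<in> delta d k \<sigma> \<Longrightarrow> \<Omega> \<sigma> 0 \<tau> = \<tau>"
  using group_hom.hom_one[OF group_hom_\<Omega>, of \<sigma>] by (simp only: one_BijGroup one_integer_mod_group) simp

lemma \<Omega>_transitive:
  assumes "\<sigma> \<in> ridges d k" "\<tau> \<in> delta d k \<sigma>" "\<tau>' \<in> delta d k \<sigma>"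
  obtains l where "l \<in> {0..<int k}" "\<Omega> \<sigma> l \<tau> = \<tau>'"
  using k_ordering assms that unfolding k_ordering_def carrier_integer_mod_group_k by blast

section \<open>The incidence tree\<close>

text \<open>The face along which \<open>\<tau>\<close> was attached. The initial simplex has path \<open>[]\<close> and does not
  contain \<open>New []\<close>, so there the base face is the whole cell.\<close>
definition base_face :: "vert set \<Rightarrow> vert set" where
  "base_face \<tau> = \<tau> - {New (cell_path d k \<tau>)}"

text \<open>The cell with which the ridge \<open>\<sigma>\<close> was created; all other cells containing \<open>\<sigma>\<close> were
  attached along it.\<close>
definition creator :: "vert set \<Rightarrow> vert set" where
  "creator \<sigma> = (THE c. c \<in> delta d k \<sigma> \<and> \<sigma> \<noteq> base_face c)"

lemma base_face_subset: "base_face \<tau> \<subseteq> \<tau>"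
  unfolding base_face_def by blast

lemma base_face_initial: "\<tau> \<in> dcells d k \<Longrightarrow> cell_path d k \<tau> = [] \<Longrightarrow> base_face \<tau> = \<tau>"
  unfolding base_face_def using arb_cells_New_memD arb_cells_cell_path by blast

lemma cell_path_ne_Nil_if_card_base_face:
  assumes "\<tau> \<in> dcells d k" "card (base_face \<tau>) = d"
  shows "cell_path d k \<tau> \<noteq> []"
proof
  assume "cell_path d k \<tau> = []"
  then have "card (base_face \<tau>) = Suc d" using base_face_initial dcells_card assms(1) by simp
  then show False using assms(2) by simp
qed

lemma card_base_face:
  assumes "\<tau> \<in> dcells d k" "cell_path d k \<tau> \<noteq> []"
  shows "card (base_face \<tau>) = d"
  using arb_cells_New_mem[OF arb_cells_cell_path[OF assms(1)] assms(2)] dcells_card[OF assms(1)]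
  unfolding base_face_def by simp

lemma base_face_in_ridges:
  "\<tau> \<in> dcells d k \<Longrightarrow> cell_path d k \<tau> \<noteq> [] \<Longrightarrow> base_face \<tau> \<in> ridges d k"
  using card_base_face base_face_subset unfolding ridges_def by blast

lemma New_cell_path_mem:
  assumes "\<tau> \<in> dcells d k" "\<sigma> \<subseteq> \<tau>" "card \<sigma> = d" "\<sigma> \<noteq> base_face \<tau>" "cell_path d k \<tau> \<noteq> []"
  shows "New (cell_path d k \<tau>) \<in> \<sigma>"
proof (rule ccontr)
  assume "New (cell_path d k \<tau>) \<notin> \<sigma>"
  then have "\<sigma> \<subseteq> base_face \<tau>" unfolding base_face_def using assms(2) by auto
  moreover have "finite (base_face \<tau>)" using dcells_card[OF assms(1)] unfolding base_face_def by simp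
  ultimately show False using card_subset_eq card_base_face assms by metis
qed

lemma creator_unique:
  assumes "card \<sigma> = d" "c1 \<in> delta d k \<sigma>" "c2 \<in> delta d k \<sigma>" "\<sigma> \<noteq> base_face c1" "\<sigma> \<noteq> base_face c2"
  shows "c1 = c2"
proof (rule arb_cells_eqI)
  have c: "c1 \<in> dcells d k" "\<sigma> \<subseteq> c1" "c2 \<in> dcells d k" "\<sigma> \<subseteq> c2"
    using assms(2,3) unfolding delta_def by auto
  then show "(cell_path d k c1, c1) \<in> arb_cells d k" "(cell_path d k c2, c2) \<in> arb_cells d k"
    using arb_cells_cell_path by auto
  show "New (cell_path d k c1) \<in> c2" if "cell_path d k c1 \<noteq> []"
    using New_cell_path_mem[OF c(1,2) assms(1,4) that] c(4) by blast
  show "New (cell_path d k c2) \<in> c1" if "cell_path d k c2 \<noteq> []"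
    using New_cell_path_mem[OF c(3,4) assms(1,5) that] c(2) by blast
qed

lemma creator_eq:
  assumes "card \<sigma> = d" "c \<in> delta d k \<sigma>" "\<sigma> \<noteq> base_face c"
  shows "creator \<sigma> = c"
  unfolding creator_def
proof (rule the_equality)
  show "c \<in> delta d k \<sigma> \<and> \<sigma> \<noteq> base_face c" using assms by simp
  show "c' = c" if "c' \<in> delta d k \<sigma> \<and> \<sigma> \<noteq> base_face c'" for c'
    using creator_unique[OF assms(1)] assms(2,3) that by blast
qed

lemma attaching_cell:
  assumes "\<tau> \<in> dcells d k" "cell_path d k \<tau> \<noteq> []"
  obtains V where "V \<in> delta d k (base_face \<tau>)" "base_face \<tau> \<noteq> base_face V"
    "Suc (length (cell_path d k V)) = length (cell_path d k \<tau>)"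
proof -
  obtain p x where "cell_path d k \<tau> = p @ [x]"
    using assms(2) rev_exhaust by blast
  moreover obtain v j where "x = (v, j)" by (cases x)
  ultimately have p: "cell_path d k \<tau> = p @ [(v, j)]" by simp
  then have "(p @ [(v, j)], \<tau>) \<in> arb_cells d k" using arb_cells_cell_path[OF assms(1)] by simp
  then obtain V where V: "(p, V) \<in> arb_cells d k" "v \<in> V" "p = [] \<or> v \<noteq> New p"
    "\<tau> = insert (New (p @ [(v, j)])) (V - {v})"
    by (rule arb_cells_snocE)
  have base: "base_face \<tau> = V - {v}"
    using V(4) arb_cells_New_snoc_not_mem[OF V(1)] p unfolding base_face_def by auto
  have "V \<in> delta d k (base_face \<tau>)"
    unfolding delta_def base using arb_cells_dcells[OF V(1)] by auto
  moreover have "base_face \<tau> \<noteq> base_face V"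
  proof (cases "p = []")
    case True
    then show ?thesis
      using base V(2) base_face_initial arb_cells_dcells[OF V(1)] cell_path_eq[OF V(1)] by auto
  next
    case False
    then have "New p \<in> base_face \<tau>" using base V(3) arb_cells_New_mem[OF V(1)] by simp
    moreover have "New p \<notin> base_face V" unfolding base_face_def using cell_path_eq[OF V(1)] by simp
    ultimately show ?thesis by auto
  qed
  moreover have "Suc (length (cell_path d k V)) = length (cell_path d k \<tau>)"
    using cell_path_eq[OF V(1)] p by simp
  ultimately show ?thesis using that by blast
qed

text \<open>Cells and ridges form a tree, the incidence graph of \<open>T\<^sub>d\<^sub>,\<^sub>k\<close>, rooted at the initial simplex:
  the parent of a cell is its base face and the parent of a ridge is its creator. Depths are
  counted so that cells sit at even and ridges at odd levels.\<close>
definition tree_parent :: "vert set \<Rightarrow> vert set" where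
  "tree_parent Y = (if card Y = Suc d then base_face Y else creator Y)"

definition tree_depth :: "vert set \<Rightarrow> nat" where
  "tree_depth Y = (if card Y = Suc d then 2 * length (cell_path d k Y)
     else Suc (2 * length (cell_path d k (creator Y))))"

definition is_parent :: "vert set \<Rightarrow> vert set \<Rightarrow> bool" where
  "is_parent x y \<longleftrightarrow> tree_parent x = y \<and> tree_depth x = Suc (tree_depth y)"

lemma tree_edge:
  assumes "\<sigma> \<in> ridges d k" "c \<in> delta d k \<sigma>"
  shows "is_parent \<sigma> c \<or> is_parent c \<sigma>"
proof -
  have card: "card \<sigma> = d" "card c = Suc d"
    using assms dcells_card unfolding ridges_def delta_def by auto
  show ?thesis
  proof (cases "\<sigma> = base_face c")
    case False
    then have "is_parent \<sigma> c"
      using creator_eq[OF card(1) assms(2)] card unfolding is_parent_def tree_parent_def tree_depth_def by simp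
    then show ?thesis ..
  next
    case True
    have c: "c \<in> dcells d k" "\<sigma> \<subseteq> c" using assms(2) unfolding delta_def by auto
    then have "cell_path d k c \<noteq> []" using cell_path_ne_Nil_if_card_base_face card(1) True by simp
    then obtain V where V: "V \<in> delta d k (base_face c)" "base_face c \<noteq> base_face V"
        "Suc (length (cell_path d k V)) = length (cell_path d k c)"
      using attaching_cell[OF c(1)] by blast
    have "creator \<sigma> = V" using creator_eq[OF card(1)] V(1,2) True by simp
    then have "is_parent c \<sigma>"
      using V(3) card True unfolding is_parent_def tree_parent_def tree_depth_def by simp
    then show ?thesis ..
  qed
qed

lemma exists_creator:
  assumes "\<sigma> \<in> ridges d k"
  obtains c where "c \<in> delta d k \<sigma>" "\<sigma> \<noteq> base_face c"
proof -
  obtain c where c: "c \<in> dcells d k" "\<sigma> \<subseteq> c" "card \<sigma> = d" using assms unfolding ridges_def by blast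
  show ?thesis
  proof (cases "\<sigma> = base_face c")
    case True
    then have "cell_path d k c \<noteq> []" using cell_path_ne_Nil_if_card_base_face c by simp
    then obtain V where "V \<in> delta d k (base_face c)" "base_face c \<noteq> base_face V"
      using attaching_cell[OF c(1)] by blast
    then show ?thesis using True that by blast
  next
    case False
    moreover have "c \<in> delta d k \<sigma>" using c unfolding delta_def by simp
    ultimately show ?thesis using that by blast
  qed
qed

text \<open>A creator \<open>c\<close> of \<open>\<sigma> = c - {u}\<close> and its \<open>k - 1\<close> children attached along \<open>\<sigma>\<close>
  all contain \<open>\<sigma>\<close>.\<close>
lemma card_delta_ge:
  assumes "\<sigma> \<in> ridges d k" "finite (delta d k \<sigma>)"
  shows "k \<le> card (delta d k \<sigma>)"
proof -
  obtain c where c: "c \<in> delta d k \<sigma>" "\<sigma> \<noteq> base_face c" using exists_creator[OF assms(1)] .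
  have cc: "c \<in> dcells d k" "\<sigma> \<subseteq> c" "card \<sigma> = d" using c(1) assms(1) unfolding delta_def ridges_def by auto
  obtain i where "i \<le> d" "\<sigma> = face c i" using ridge_eq_face[OF assms(1) c(1)] .
  then obtain u where u: "u \<in> c" "\<sigma> = c - {u}" using face_eq_Diff[OF cc(1)] by blast
  define p where "p = cell_path d k c"
  have ac: "(p, c) \<in> arb_cells d k" unfolding p_def using arb_cells_cell_path[OF cc(1)] .
  have cond: "p = [] \<or> u \<noteq> New p"
  proof (cases "p = []")
    case False
    then have "New p \<in> \<sigma>" using New_cell_path_mem[OF cc c(2)] unfolding p_def by blast
    then show ?thesis using u(2) by blast
  qed simp
  define child where "child j = insert (New (p @ [(u, j)])) (c - {u})" for j
  have arb_child: "(p @ [(u, j)], child j) \<in> arb_cells d k" if "j \<in> {1..<k}" for j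
    unfolding child_def using arb_cells.attach[OF ac u(1) cond] that by simp
  have path_child: "cell_path d k (child j) = p @ [(u, j)]" if "j \<in> {1..<k}" for j
    using cell_path_eq[OF arb_child[OF that]] .
  have "child j \<in> delta d k \<sigma>" if "j \<in> {1..<k}" for j
    using arb_cells_dcells[OF arb_child[OF that]] u(2) unfolding delta_def child_def by blast
  then have sub: "insert c (child ` {1..<k}) \<subseteq> delta d k \<sigma>" using c(1) by blast
  have "inj_on child {1..<k}"
  proof (rule inj_onI)
    fix a b assume ab: "a \<in> {1..<k}" "b \<in> {1..<k}" "child a = child b"
    have "p @ [(u, a)] = cell_path d k (child a)" using path_child ab(1) by simp
    also have "\<dots> = p @ [(u, b)]" using path_child ab(2,3) by simp
    finally show "a = b" by simp
  qed
  then have "card (child ` {1..<k}) = k - 1" by (simp add: card_image)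
  moreover have "c \<notin> child ` {1..<k}"
  proof
    assume "c \<in> child ` {1..<k}"
    then obtain j where "j \<in> {1..<k}" "c = child j" by blast
    then have "p = p @ [(u, j)]" using path_child unfolding p_def by metis
    then show False by simp
  qed
  ultimately have "card (insert c (child ` {1..<k})) = k" using k_pos by simp
  then show ?thesis using card_mono[OF assms(2) sub] by simp
qed

text \<open>Since \<open>\<delta>(\<sigma>)\<close> has at least \<open>k\<close> elements, the transitive action of \<open>\<int>/k\<int>\<close> on it
  is regular.\<close>
lemma \<Omega>_fixed_imp_zero:
  assumes "\<sigma> \<in> ridges d k" "\<tau> \<in> delta d k \<sigma>" "l \<in> {0..<int k}" "\<Omega> \<sigma> l \<tau> = \<tau>"
  shows "l = 0"
proof -
  define f where "f l = \<Omega> \<sigma> l \<tau>" for l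
  have img: "f ` {0..<int k} = delta d k \<sigma>"
  proof
    show "f ` {0..<int k} \<subseteq> delta d k \<sigma>" unfolding f_def using \<Omega>_mem_delta[OF assms(1,2)] by auto
    show "delta d k \<sigma> \<subseteq> f ` {0..<int k}"
    proof
      fix x assume "x \<in> delta d k \<sigma>"
      then obtain l where "l \<in> {0..<int k}" "\<Omega> \<sigma> l \<tau> = x" using \<Omega>_transitive[OF assms(1,2)] by blast
      then show "x \<in> f ` {0..<int k}" unfolding f_def by blast
    qed
  qed
  have fin: "finite (delta d k \<sigma>)" using img[symmetric] by simp
  have "card (f ` {0..<int k}) = card {0..<int k}"
  proof (rule antisym)
    show "card (f ` {0..<int k}) \<le> card {0..<int k}" by (rule card_image_le) simp
    show "card {0..<int k} \<le> card (f ` {0..<int k})"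
      using card_delta_ge[OF assms(1) fin] img by simp
  qed
  then have "inj_on f {0..<int k}" by (rule eq_card_imp_inj_on[rotated]) simp
  moreover have "f l = f 0" unfolding f_def using assms(4) \<Omega>_zero[OF assms(1,2)] by simp
  moreover have "0 \<in> {0..<int k}" using k_pos by simp
  ultimately show ?thesis using assms(3) unfolding inj_on_def by blast
qed

lemma is_parent_depth: "is_parent x y \<Longrightarrow> tree_depth x = Suc (tree_depth y)"
  unfolding is_parent_def by simp

lemma is_parent_unique: "is_parent x y \<Longrightarrow> is_parent x z \<Longrightarrow> y = z"
  unfolding is_parent_def by simp

definition on_root_path :: "vert set \<Rightarrow> vert set \<Rightarrow> bool" where
  "on_root_path x y \<longleftrightarrow> (\<exists>n. (tree_parent ^^ n) x = y \<and> tree_depth y + n = tree_depth x)"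

lemma on_root_path_refl: "on_root_path x x"
  unfolding on_root_path_def by (rule exI[of _ 0]) simp

lemma on_root_path_parent: "on_root_path x y \<Longrightarrow> is_parent y z \<Longrightarrow> on_root_path x z"
  unfolding on_root_path_def is_parent_def by (metis add_Suc_shift funpow.simps(2) o_apply)

lemma on_root_path_depth: "on_root_path x y \<Longrightarrow> tree_depth y \<le> tree_depth x"
  unfolding on_root_path_def by auto

lemma on_root_path_unique:
  "on_root_path x y \<Longrightarrow> on_root_path x z \<Longrightarrow> tree_depth y = tree_depth z \<Longrightarrow> y = z"
  unfolding on_root_path_def by (metis add_left_cancel)

text \<open>The cell \<open>c\<close> has been entered across the ridge \<open>\<sigma>\<close> by a non-backtracking walk starting at
  \<open>t\<^sub>0\<close>: either the walk is still climbing the root path of \<open>t\<^sub>0\<close>, or it has left that path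
  and is descending.\<close>
definition entered_from :: "vert set \<Rightarrow> vert set \<Rightarrow> vert set \<Rightarrow> bool" where
  "entered_from t\<^sub>0 c \<sigma> \<longleftrightarrow>
     (is_parent \<sigma> c \<and> on_root_path t\<^sub>0 \<sigma>) \<or> (is_parent c \<sigma> \<and> \<not> on_root_path t\<^sub>0 c)"

lemma entered_from_neq: "entered_from t\<^sub>0 c \<sigma> \<Longrightarrow> c \<noteq> t\<^sub>0"
  unfolding entered_from_def using on_root_path_refl on_root_path_depth is_parent_depth by fastforce

lemma entered_from_start:
  assumes "\<sigma> \<in> ridges d k" "t\<^sub>0 \<in> delta d k \<sigma>" "c \<in> delta d k \<sigma>" "c \<noteq> t\<^sub>0"
  shows "entered_from t\<^sub>0 c \<sigma>"
proof (cases "is_parent \<sigma> t\<^sub>0")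
  case True
  then have "is_parent c \<sigma>" using tree_edge[OF assms(1,3)] is_parent_unique assms(4) by blast
  then have "\<not> on_root_path t\<^sub>0 c"
    using True on_root_path_depth is_parent_depth by fastforce
  with \<open>is_parent c \<sigma>\<close> show ?thesis unfolding entered_from_def by blast
next
  case False
  then have up: "is_parent t\<^sub>0 \<sigma>" using tree_edge[OF assms(1,2)] by blast
  then have "on_root_path t\<^sub>0 \<sigma>" using on_root_path_parent on_root_path_refl by blast
  moreover have "\<not> on_root_path t\<^sub>0 c" if "is_parent c \<sigma>"
    using that up on_root_path_unique[OF on_root_path_refl] is_parent_depth assms(4) by metis
  ultimately show ?thesis using tree_edge[OF assms(1,3)] unfolding entered_from_def by blast
qed

lemma entered_from_step:
  assumes "entered_from t\<^sub>0 c \<sigma>" "\<sigma>' \<in> ridges d k" "c \<in> delta d k \<sigma>'" "\<sigma>' \<noteq> \<sigma>"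
    and "c' \<in> delta d k \<sigma>'" "c' \<noteq> c"
  shows "entered_from t\<^sub>0 c' \<sigma>'"
proof -
  have c': "is_parent \<sigma>' c' \<or> is_parent c' \<sigma>'" using tree_edge[OF assms(2,5)] .
  have not_both: "\<not> (is_parent \<sigma>' c \<and> is_parent \<sigma>' c')" using is_parent_unique assms(6) by blast
  from assms(1) consider (climbing) "is_parent \<sigma> c" "on_root_path t\<^sub>0 \<sigma>"
    | (descending) "is_parent c \<sigma>" "\<not> on_root_path t\<^sub>0 c"
    unfolding entered_from_def by blast
  then show ?thesis
  proof cases
    case climbing
    have c: "on_root_path t\<^sub>0 c" using on_root_path_parent climbing by blast
    consider (up) "is_parent c \<sigma>'" | (down) "is_parent \<sigma>' c" using tree_edge[OF assms(2,3)] by blast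
    then show ?thesis
    proof cases
      case up
      have "on_root_path t\<^sub>0 \<sigma>'" using on_root_path_parent c up by blast
      moreover have "\<not> on_root_path t\<^sub>0 c'" if "is_parent c' \<sigma>'"
        using that up on_root_path_unique[OF c] is_parent_depth assms(6) by metis
      ultimately show ?thesis using c' unfolding entered_from_def by blast
    next
      case down
      have "\<not> on_root_path t\<^sub>0 c'"
      proof
        assume "on_root_path t\<^sub>0 c'"
        then have "on_root_path t\<^sub>0 \<sigma>'" using on_root_path_parent c' down not_both by blast
        moreover have "tree_depth \<sigma>' = tree_depth \<sigma>" using down climbing(1) is_parent_depth by simp
        ultimately show False using on_root_path_unique climbing(2) assms(4) by blast
      qed
      then show ?thesis using c' down not_both unfolding entered_from_def by blast
    qed
  next
    case descending
    have down: "is_parent \<sigma>' c"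
      using tree_edge[OF assms(2,3)] descending(1) is_parent_unique assms(4) by blast
    have "\<not> on_root_path t\<^sub>0 c'"
      using on_root_path_parent c' down not_both descending(2) by blast
    then show ?thesis using c' down not_both unfolding entered_from_def by blast
  qed
qed

definition letter_exponent :: "letter \<Rightarrow> int" where
  "letter_exponent x = (if snd x then 1 mod int k else (int k - 1) mod int k)"

lemma letter_exponent_range: "letter_exponent x \<in> {0..<int k}"
  unfolding letter_exponent_def using k_pos by auto

lemma act_letter_eq: "act_letter k \<Gamma> \<Omega> x \<tau> = \<Omega> (face \<tau> (fst x)) (letter_exponent x) \<tau>"
  unfolding act_letter_def face_def letter_exponent_def by simp

lemma act_letter_mem_delta:
  "\<tau> \<in> dcells d k \<Longrightarrow> fst x \<le> d \<Longrightarrow> act_letter k \<Gamma> \<Omega> x \<tau> \<in> delta d k (face \<tau> (fst x))"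
  unfolding act_letter_eq
  using \<Omega>_mem_delta[OF face_in_ridges mem_delta_face letter_exponent_range] by blast

lemma act_letter_dcells: "\<tau> \<in> dcells d k \<Longrightarrow> fst x \<le> d \<Longrightarrow> act_letter k \<Gamma> \<Omega> x \<tau> \<in> dcells d k"
  using act_letter_mem_delta unfolding delta_def by blast

lemma face_act_letter:
  "\<tau> \<in> dcells d k \<Longrightarrow> fst x \<le> d \<Longrightarrow> face (act_letter k \<Gamma> \<Omega> x \<tau>) (fst x) = face \<tau> (fst x)"
  using face_of_mem_delta act_letter_mem_delta by blast

lemma act_word_append: "act_word k \<Gamma> \<Omega> (u @ v) \<tau> = act_word k \<Gamma> \<Omega> u (act_word k \<Gamma> \<Omega> v \<tau>)"
  by (induction u) auto

lemma act_word_dcells: "\<tau> \<in> dcells d k \<Longrightarrow> w \<in> words d \<Longrightarrow> act_word k \<Gamma> \<Omega> w \<tau> \<in> dcells d k"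
  by (induction w) (auto simp: words_def act_letter_dcells)

lemma act_word_replicate:
  assumes "\<tau> \<in> dcells d k" "i \<le> d"
  shows "act_word k \<Gamma> \<Omega> (replicate n (i, True)) \<tau> = \<Omega> (face \<tau> i) (int n mod int k) \<tau>"
proof (induction n)
  case 0
  show ?case using \<Omega>_zero[OF face_in_ridges[OF assms] mem_delta_face[OF assms(1)]] by simp
next
  case (Suc n)
  let ?\<sigma> = "face \<tau> i" and ?l = "int n mod int k"
  have \<sigma>: "?\<sigma> \<in> ridges d k" "\<tau> \<in> delta d k ?\<sigma>"
    using face_in_ridges[OF assms] mem_delta_face[OF assms(1)] by auto
  have l: "?l \<in> {0..<int k}" using k_pos by simp
  have "face (\<Omega> ?\<sigma> ?l \<tau>) i = ?\<sigma>" using face_of_mem_delta[OF assms \<Omega>_mem_delta[OF \<sigma> l]] .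
  then have "act_word k \<Gamma> \<Omega> (replicate (Suc n) (i, True)) \<tau> = \<Omega> ?\<sigma> (1 mod int k) (\<Omega> ?\<sigma> ?l \<tau>)"
    using Suc by (simp add: act_letter_eq letter_exponent_def)
  also have "\<dots> = \<Omega> ?\<sigma> ((1 mod int k + ?l) mod int k) \<tau>"
    using \<Omega>_add[OF \<sigma> _ l] k_pos by simp
  also have "(1 mod int k + ?l) mod int k = int (Suc n) mod int k"
    by (simp add: mod_add_eq add.commute)
  finally show ?case .
qed

lemma act_word_relator:
  "\<tau> \<in> dcells d k \<Longrightarrow> i \<le> d \<Longrightarrow> act_word k \<Gamma> \<Omega> (replicate k (i, True)) \<tau> = \<tau>"
  using act_word_replicate \<Omega>_zero[OF face_in_ridges mem_delta_face] by simp

lemma act_word_cancel: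
  assumes "\<tau> \<in> dcells d k" "i \<le> d"
  shows "act_word k \<Gamma> \<Omega> [(i, b), (i, \<not> b)] \<tau> = \<tau>"
proof -
  let ?\<sigma> = "face \<tau> i"
  have \<sigma>: "?\<sigma> \<in> ridges d k" "\<tau> \<in> delta d k ?\<sigma>"
    using face_in_ridges[OF assms] mem_delta_face[OF assms(1)] by auto
  have "act_word k \<Gamma> \<Omega> [(i, b), (i, \<not> b)] \<tau> =
      \<Omega> ?\<sigma> (letter_exponent (i, b)) (\<Omega> ?\<sigma> (letter_exponent (i, \<not> b)) \<tau>)"
    using face_act_letter[OF assms(1), of "(i, \<not> b)"] assms(2) by (simp add: act_letter_eq)
  also have "\<dots> = \<Omega> ?\<sigma> ((letter_exponent (i, b) + letter_exponent (i, \<not> b)) mod int k) \<tau>"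
    using \<Omega>_add[OF \<sigma> letter_exponent_range letter_exponent_range] .
  also have "(letter_exponent (i, b) + letter_exponent (i, \<not> b)) mod int k = 0"
    unfolding letter_exponent_def by (cases b) (simp_all add: mod_add_eq add.commute)
  finally show ?thesis using \<Omega>_zero[OF \<sigma>] by simp
qed

lemma act_word_elem_step:
  assumes "(w, w') \<in> elem_step d k" "w \<in> words d" "\<tau> \<in> dcells d k"
  shows "act_word k \<Gamma> \<Omega> w \<tau> = act_word k \<Gamma> \<Omega> w' \<tau>"
  using assms(1)
proof (cases rule: elem_step.cases)
  case (cancel i u b v)
  have "act_word k \<Gamma> \<Omega> v \<tau> \<in> dcells d k"
    using act_word_dcells[OF assms(3)] assms(2) cancel(1) by (simp add: words_def)
  then show ?thesis
    using cancel act_word_cancel act_word_append by (metis append.assoc)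
next
  case (relator i u v)
  have "act_word k \<Gamma> \<Omega> v \<tau> \<in> dcells d k"
    using act_word_dcells[OF assms(3)] assms(2) relator(1) by (simp add: words_def)
  then show ?thesis
    using relator act_word_relator act_word_append by metis
qed

lemma act_word_word_eqv:
  assumes "(w, w') \<in> word_eqv d k" "\<tau> \<in> dcells d k"
  shows "act_word k \<Gamma> \<Omega> w \<tau> = act_word k \<Gamma> \<Omega> w' \<tau>"
proof -
  have "(w, w') \<in> elem_conv d k" "w \<in> words d" using word_eqvD[OF assms(1)] by auto
  then show ?thesis
  proof (induction rule: rtrancl_induct)
    case (step y z)
    have y: "y \<in> words d" using elem_conv_words step by blast
    from step.hyps(2) consider "(y, z) \<in> elem_step d k" | "(z, y) \<in> elem_step d k" by blast
    then show ?case
    proof cases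
      case 1
      then show ?thesis using act_word_elem_step[OF _ y assms(2)] step by simp
    next
      case 2
      then have "z \<in> words d" using y by (cases rule: elem_step.cases) (auto simp: words_def)
      then show ?thesis using act_word_elem_step[OF 2 _ assms(2)] step by simp
    qed
  qed simp
qed

lemma act_word_class:
  "w \<in> words d \<Longrightarrow> \<tau> \<in> dcells d k \<Longrightarrow> act k \<Gamma> \<Omega> (word_class d k w) \<tau> = act_word k \<Gamma> \<Omega> w \<tau>"
  unfolding act_def using act_word_word_eqv[OF some_word_class] by simp

section \<open>Freeness of the action\<close>

text \<open>Each block moves the current cell to a different cell across a ridge, and the ridges of
  consecutive blocks differ, so the blocks trace a non-backtracking walk in the tree.\<close>
lemma act_block_moves:
  assumes "c \<in> dcells d k" "i \<le> d" "0 < e" "e < k"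
  shows "act_word k \<Gamma> \<Omega> (replicate e (i, True)) c \<in> delta d k (face c i)"
    and "act_word k \<Gamma> \<Omega> (replicate e (i, True)) c \<noteq> c"
proof -
  have \<sigma>: "face c i \<in> ridges d k" "c \<in> delta d k (face c i)"
    using face_in_ridges[OF assms(1,2)] mem_delta_face[OF assms(1)] by auto
  have e: "int e mod int k \<in> {0..<int k}" "int e mod int k \<noteq> 0" using assms(3,4) by auto
  have eq: "act_word k \<Gamma> \<Omega> (replicate e (i, True)) c = \<Omega> (face c i) (int e mod int k) c"
    using act_word_replicate[OF assms(1,2)] .
  show "act_word k \<Gamma> \<Omega> (replicate e (i, True)) c \<in> delta d k (face c i)"
    unfolding eq using \<Omega>_mem_delta[OF \<sigma> e(1)] .
  show "act_word k \<Gamma> \<Omega> (replicate e (i, True)) c \<noteq> c"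
    unfolding eq using \<Omega>_fixed_imp_zero[OF \<sigma> e(1)] e(2) by blast
qed

lemma act_block_word_entered_from:
  assumes "bs \<noteq> []" "\<forall>b\<in>set bs. fst b \<le> d \<and> 0 < snd b \<and> snd b < k" "distinct_adj (map fst bs)"
    and "t\<^sub>0 \<in> dcells d k"
  shows "act_word k \<Gamma> \<Omega> (block_word bs) t\<^sub>0 \<in> dcells d k \<and>
    entered_from t\<^sub>0 (act_word k \<Gamma> \<Omega> (block_word bs) t\<^sub>0)
      (face (act_word k \<Gamma> \<Omega> (block_word bs) t\<^sub>0) (fst (hd bs)))"
  using assms(1-3)
proof (induction bs)
  case (Cons b bs')
  obtain i e where b: "b = (i, e)" by (cases b)
  have ie: "i \<le> d" "0 < e" "e < k" using Cons.prems(2) b by auto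
  define c\<^sub>0 where "c\<^sub>0 = act_word k \<Gamma> \<Omega> (block_word bs') t\<^sub>0"
  define c where "c = act_word k \<Gamma> \<Omega> (block_word (b # bs')) t\<^sub>0"
  define \<sigma> where "\<sigma> = face c\<^sub>0 i"
  have "block_word bs' \<in> words d"
    using Cons.prems(2) by (auto simp: block_word_def words_def)
  then have c\<^sub>0: "c\<^sub>0 \<in> dcells d k" unfolding c\<^sub>0_def using act_word_dcells[OF assms(4)] by blast
  have "c = act_word k \<Gamma> \<Omega> (replicate e (i, True)) c\<^sub>0"
    unfolding c_def c\<^sub>0_def b by (simp add: act_word_append)
  then have c: "c \<in> delta d k \<sigma>" "c \<noteq> c\<^sub>0"
    unfolding \<sigma>_def using act_block_moves[OF c\<^sub>0 ie] by simp_all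
  have \<sigma>: "\<sigma> \<in> ridges d k" "c\<^sub>0 \<in> delta d k \<sigma>"
    unfolding \<sigma>_def using face_in_ridges[OF c\<^sub>0 ie(1)] mem_delta_face[OF c\<^sub>0] by auto
  have entered: "entered_from t\<^sub>0 c \<sigma>"
  proof (cases "bs' = []")
    case True
    then have "c\<^sub>0 = t\<^sub>0" unfolding c\<^sub>0_def by simp
    then show ?thesis using entered_from_start[OF \<sigma>(1)] \<sigma>(2) c by simp
  next
    case False
    then obtain j r r' where bs': "bs' = (j, r) # r'" by (metis list.exhaust prod.exhaust)
    have "distinct_adj (i # j # map fst r')" using Cons.prems(3) bs' b by simp
    then have "j \<noteq> i" by (simp add: distinct_adj_Cons)
    then have "face c\<^sub>0 j \<noteq> \<sigma>" unfolding \<sigma>_def using face_neq[OF c\<^sub>0 ie(1)] by simp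
    moreover have "entered_from t\<^sub>0 c\<^sub>0 (face c\<^sub>0 j)"
      using Cons.IH[OF False] Cons.prems(2,3) distinct_adj_ConsD bs' unfolding c\<^sub>0_def by simp
    ultimately show ?thesis using entered_from_step \<sigma> c by blast
  qed
  have "face c i = \<sigma>" unfolding \<sigma>_def using face_of_mem_delta[OF c\<^sub>0 ie(1)] c \<sigma>_def by simp
  then show ?case using entered c b delta_def unfolding c_def by simp
qed simp

lemma act_positive_word_neq:
  assumes "w \<noteq> []" "\<forall>x\<in>set w. snd x \<and> fst x \<le> d"
    and "\<nexists>u v i. w = u @ replicate k (i, True) @ v" "t\<^sub>0 \<in> dcells d k"
  shows "act_word k \<Gamma> \<Omega> w t\<^sub>0 \<noteq> t\<^sub>0"
proof -
  obtain bs where bs: "w = block_word bs" "distinct_adj (map fst bs)" "\<forall>b\<in>set bs. 0 < snd b"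
    using positive_word_blocks[of w] assms(2) by auto
  have "bs \<noteq> []" using bs(1) assms(1) by auto
  moreover have "fst b \<le> d \<and> 0 < snd b \<and> snd b < k" if "b \<in> set bs" for b
  proof -
    obtain i e where b: "b = (i, e)" by (cases b)
    have "(i, e) \<in> set bs" using that b by simp
    then obtain u v where "block_word bs = u @ replicate e (i, True) @ v"
      by (rule block_infix_block_word)
    then have w: "w = u @ replicate e (i, True) @ v" using bs(1) by simp
    have "0 < e" using bs(3) that b by auto
    then have "i \<le> d" using assms(2) w by auto
    moreover have "e < k"
    proof (rule ccontr)
      assume "\<not> e < k"
      then have "w = u @ replicate k (i, True) @ (replicate (e - k) (i, True) @ v)"
        using w by (simp flip: replicate_add)
      then show False using assms(3) by blast
    qed
    ultimately show ?thesis using \<open>0 < e\<close> b by simp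
  qed
  ultimately show ?thesis
    using act_block_word_entered_from[OF _ _ bs(2) assms(4)] entered_from_neq bs(1) by blast
qed

lemma positive_word_fixed_imp_trivial:
  assumes "\<tau> \<in> dcells d k" "\<forall>x\<in>set w. snd x \<and> fst x \<le> d" "act_word k \<Gamma> \<Omega> w \<tau> = \<tau>"
  shows "(w, []) \<in> word_eqv d k"
  using assms(2,3)
proof (induction "length w" arbitrary: w rule: less_induct)
  case less
  have w: "w \<in> words d" using less.prems(1) by (simp add: words_def)
  show ?case
  proof (cases "\<exists>u v i. w = u @ replicate k (i, True) @ v")
    case True
    then obtain u v i where uv: "w = u @ replicate k (i, True) @ v" by blast
    have "(i, True) \<in> set w" using uv k_pos by (cases k) auto
    then have "i \<le> d" using less.prems(1) by auto
    then have "(w, u @ v) \<in> elem_step d k" unfolding uv by (rule elem_step.relator)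
    then have eqv: "(w, u @ v) \<in> word_eqv d k" using elem_step_word_eqv w by blast
    have "(u @ v, []) \<in> word_eqv d k"
    proof (rule less.hyps)
      show "length (u @ v) < length w" using uv k_pos by simp
      show "\<forall>x\<in>set (u @ v). snd x \<and> fst x \<le> d" using less.prems(1) uv by auto
      show "act_word k \<Gamma> \<Omega> (u @ v) \<tau> = \<tau>" using act_word_word_eqv[OF eqv assms(1)] less.prems(2) by simp
    qed
    then show ?thesis using word_eqv_trans[OF eqv] by blast
  next
    case False
    then have "w = []" using act_positive_word_neq[OF _ less.prems(1) _ assms(1)] less.prems(2) by blast
    then show ?thesis using word_eqv_refl w by simp
  qed
qed

lemma act_word_fixed_imp_trivial:
  assumes "w \<in> words d" "\<tau> \<in> dcells d k" "act_word k \<Gamma> \<Omega> w \<tau> = \<tau>"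
  shows "(w, []) \<in> word_eqv d k"
proof -
  have "0 < k" using k_pos by simp
  then obtain w' where w': "(w, w') \<in> word_eqv d k" "\<forall>x\<in>set w'. snd x \<and> fst x \<le> d"
    using positive_word_eqv[OF _ assms(1)] by blast
  have "act_word k \<Gamma> \<Omega> w' \<tau> = \<tau>" using act_word_word_eqv[OF w'(1) assms(2)] assms(3) by simp
  then have "(w', []) \<in> word_eqv d k" using positive_word_fixed_imp_trivial[OF assms(2) w'(2)] by blast
  then show ?thesis using word_eqv_trans[OF w'(1)] by blast
qed

lemma act_word_eq_imp_word_eqv:
  assumes "w \<in> words d" "w' \<in> words d" "\<tau> \<in> dcells d k"
    and "act_word k \<Gamma> \<Omega> w \<tau> = act_word k \<Gamma> \<Omega> w' \<tau>"
  shows "(w, w') \<in> word_eqv d k"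
proof -
  define z where "z = inv_word w' @ w"
  have z: "z \<in> words d" unfolding z_def using inv_word_words[OF assms(2)] assms(1) by (rule append_words)
  have "act_word k \<Gamma> \<Omega> z \<tau> = act_word k \<Gamma> \<Omega> (inv_word w' @ w') \<tau>"
    unfolding z_def using act_word_append assms(4) by simp
  also have "\<dots> = \<tau>" using act_word_word_eqv[OF inv_word_append_word_eqv[OF assms(2)] assms(3)] by simp
  finally have "(z, []) \<in> word_eqv d k" using act_word_fixed_imp_trivial[OF z assms(3)] by simp
  then have "(w' @ z, w') \<in> word_eqv d k" using word_eqv_append[OF word_eqv_refl[OF assms(2)]] by fastforce
  moreover have "((w' @ inv_word w') @ w, [] @ w) \<in> word_eqv d k"
    using word_eqv_append[OF word_append_inv_word_eqv[OF assms(2)] word_eqv_refl[OF assms(1)]] .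
  then have "(w' @ z, w) \<in> word_eqv d k" unfolding z_def by simp
  ultimately show ?thesis using word_eqv_sym word_eqv_trans by blast
qed

section \<open>The sets \<open>L\<^sub>\<rho>\<^sub>,\<^sub>\<tau>\<close>\<close>

definition reaches :: "nat set \<Rightarrow> vert set \<Rightarrow> vert set \<Rightarrow> bool" where
  "reaches J x y \<longleftrightarrow> (\<exists>u\<in>words_over J. act_word k \<Gamma> \<Omega> u x = y)"

lemma reaches_refl: "reaches J x x"
  unfolding reaches_def words_over_def by (rule bexI[of _ "[]"]) simp_all

lemma reaches_trans:
  assumes "reaches J x y" "reaches J y z"
  shows "reaches J x z"
proof -
  obtain u v where "u \<in> words_over J" "act_word k \<Gamma> \<Omega> u x = y" "v \<in> words_over J" "act_word k \<Gamma> \<Omega> v y = z"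
    using assms unfolding reaches_def by blast
  moreover have "v @ u \<in> words_over J" using calculation by (auto simp: words_over_def)
  ultimately show ?thesis unfolding reaches_def using act_word_append by metis
qed

lemma reaches_across_face:
  assumes "x \<in> dcells d k" "i \<le> d" "i \<in> J" "y \<in> delta d k (face x i)"
  shows "reaches J x y"
proof -
  obtain l where l: "l \<in> {0..<int k}" "\<Omega> (face x i) l x = y"
    using \<Omega>_transitive[OF face_in_ridges[OF assms(1,2)] mem_delta_face[OF assms(1)] assms(4)] .
  then have "act_word k \<Gamma> \<Omega> (replicate (nat l) (i, True)) x = y"
    using act_word_replicate[OF assms(1,2)] by simp
  moreover have "replicate (nat l) (i, True) \<in> words_over J" using assms(3) by (simp add: words_over_def)
  ultimately show ?thesis unfolding reaches_def by blast
qed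

text \<open>\<open>\<tau>\<close> is the first cell of the construction containing \<open>\<rho>\<close>: \<open>\<rho>\<close> contains its newest vertex.\<close>
definition first_cell :: "vert set \<Rightarrow> vert set \<Rightarrow> bool" where
  "first_cell \<rho> \<tau> \<longleftrightarrow> \<tau> \<in> dcells d k \<and> \<rho> \<subseteq> \<tau> \<and> (cell_path d k \<tau> = [] \<or> \<not> \<rho> \<subseteq> base_face \<tau>)"

lemma first_cell_unique:
  assumes "first_cell \<rho> \<tau>\<^sub>1" "first_cell \<rho> \<tau>\<^sub>2"
  shows "\<tau>\<^sub>1 = \<tau>\<^sub>2"
proof (rule arb_cells_eqI)
  show "(cell_path d k \<tau>\<^sub>1, \<tau>\<^sub>1) \<in> arb_cells d k" "(cell_path d k \<tau>\<^sub>2, \<tau>\<^sub>2) \<in> arb_cells d k"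
    using assms arb_cells_cell_path unfolding first_cell_def by auto
  show "New (cell_path d k \<tau>\<^sub>1) \<in> \<tau>\<^sub>2" if "cell_path d k \<tau>\<^sub>1 \<noteq> []"
    using assms that unfolding first_cell_def base_face_def by blast
  show "New (cell_path d k \<tau>\<^sub>2) \<in> \<tau>\<^sub>1" if "cell_path d k \<tau>\<^sub>2 \<noteq> []"
    using assms that unfolding first_cell_def base_face_def by blast
qed

text \<open>Descending along base faces that contain \<open>\<rho>\<close> only uses generators of colours outside
  \<open>\<Gamma>(\<rho>)\<close>, and reaches the first cell containing \<open>\<rho>\<close>.\<close>
lemma reaches_first_cell:
  assumes "\<tau> \<in> dcells d k" "\<rho> \<subseteq> \<tau>"
  shows "\<exists>\<tau>\<^sub>0. first_cell \<rho> \<tau>\<^sub>0 \<and>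
    reaches ({0..d} - \<Gamma> ` \<rho>) \<tau> \<tau>\<^sub>0 \<and> reaches ({0..d} - \<Gamma> ` \<rho>) \<tau>\<^sub>0 \<tau>"
  using assms
proof (induction "length (cell_path d k \<tau>)" arbitrary: \<tau> rule: less_induct)
  case less
  let ?J = "{0..d} - \<Gamma> ` \<rho>"
  show ?case
  proof (cases "first_cell \<rho> \<tau>")
    case True
    then show ?thesis using reaches_refl by blast
  next
    case False
    then have path: "cell_path d k \<tau> \<noteq> []" and sub: "\<rho> \<subseteq> base_face \<tau>"
      using less.prems unfolding first_cell_def by auto
    obtain V where V: "V \<in> delta d k (base_face \<tau>)"
      "Suc (length (cell_path d k V)) = length (cell_path d k \<tau>)"
      using attaching_cell[OF less.prems(1) path] by blast
    have \<tau>: "\<tau> \<in> delta d k (base_face \<tau>)"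
      unfolding delta_def using less.prems(1) base_face_subset by simp
    obtain i where i: "i \<le> d" "base_face \<tau> = face \<tau> i"
      using ridge_eq_face[OF base_face_in_ridges[OF less.prems(1) path] \<tau>] .
    have "i \<notin> \<Gamma> ` \<rho>" using sub i(2) unfolding face_def by auto
    then have iJ: "i \<in> ?J" using i(1) by simp
    have V': "V \<in> dcells d k" "\<rho> \<subseteq> V" using V(1) sub unfolding delta_def by auto
    have "face V i = face \<tau> i" using face_of_mem_delta[OF less.prems(1) i(1)] V(1) i(2) by simp
    then have "reaches ?J \<tau> V" "reaches ?J V \<tau>"
      using reaches_across_face[OF less.prems(1) i(1) iJ] reaches_across_face[OF V'(1) i(1) iJ]
        V(1) \<tau> i(2) by simp_all
    moreover obtain \<tau>\<^sub>0 where "first_cell \<rho> \<tau>\<^sub>0" "reaches ?J V \<tau>\<^sub>0" "reaches ?J \<tau>\<^sub>0 V"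
      using less.hyps[OF _ V'] V(2) by auto
    ultimately show ?thesis using reaches_trans by blast
  qed
qed

lemma reaches_if_subset:
  assumes "\<tau> \<in> dcells d k" "\<rho> \<subseteq> \<tau>" "\<tau>' \<in> dcells d k" "\<rho> \<subseteq> \<tau>'"
  shows "reaches ({0..d} - \<Gamma> ` \<rho>) \<tau> \<tau>'"
proof -
  obtain \<tau>\<^sub>0 where "first_cell \<rho> \<tau>\<^sub>0" "reaches ({0..d} - \<Gamma> ` \<rho>) \<tau> \<tau>\<^sub>0"
    using reaches_first_cell[OF assms(1,2)] by blast
  moreover obtain \<tau>\<^sub>0' where "first_cell \<rho> \<tau>\<^sub>0'" "reaches ({0..d} - \<Gamma> ` \<rho>) \<tau>\<^sub>0' \<tau>'"
    using reaches_first_cell[OF assms(3,4)] by blast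
  ultimately show ?thesis using first_cell_unique reaches_trans by blast
qed

lemma subset_act_word_words_over:
  assumes "w \<in> words_over ({0..d} - \<Gamma> ` \<rho>)" "\<tau> \<in> dcells d k" "\<rho> \<subseteq> \<tau>"
  shows "\<rho> \<subseteq> act_word k \<Gamma> \<Omega> w \<tau>"
  using assms(1)
proof (induction w)
  case (Cons x w)
  define t where "t = act_word k \<Gamma> \<Omega> w \<tau>"
  have x: "fst x \<le> d" "fst x \<notin> \<Gamma> ` \<rho>" and w: "w \<in> words_over ({0..d} - \<Gamma> ` \<rho>)"
    using Cons.prems by (auto simp: words_over_def)
  have "w \<in> words d" using words_over_subset[of "{0..d} - \<Gamma> ` \<rho>" d] w by auto
  then have t: "t \<in> dcells d k" "\<rho> \<subseteq> t"
    unfolding t_def using act_word_dcells[OF assms(2)] w Cons.IH by auto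
  then have "\<rho> \<subseteq> face t (fst x)" using x(2) unfolding face_def by force
  then show ?case using act_letter_mem_delta[OF t(1) x(1)] unfolding t_def delta_def by auto
qed (simp add: assms(3))

lemma L_set_eq_K_sub:
  assumes "\<tau> \<in> dcells d k" "\<rho> \<subseteq> \<tau>"
  shows "L_set d k \<Gamma> \<Omega> \<rho> \<tau> = K_sub d k ({0..d} - \<Gamma> ` \<rho>)"
proof -
  let ?J = "{0..d} - \<Gamma> ` \<rho>"
  have J: "words_over ?J \<subseteq> words d" by (rule words_over_subset) auto
  have "g \<in> word_class d k ` words_over ?J" if g: "g \<in> L_set d k \<Gamma> \<Omega> \<rho> \<tau>" for g
  proof -
    obtain w where w: "w \<in> words d" "g = word_class d k w" "\<rho> \<subseteq> act_word k \<Gamma> \<Omega> w \<tau>"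
      using g act_word_class[OF _ assms(1)] unfolding L_set_def carrier_G_dk by auto
    then obtain u where u: "u \<in> words_over ?J" "act_word k \<Gamma> \<Omega> u \<tau> = act_word k \<Gamma> \<Omega> w \<tau>"
      using reaches_if_subset[OF assms act_word_dcells[OF assms(1) w(1)]] unfolding reaches_def by blast
    then have "(u, w) \<in> word_eqv d k" using act_word_eq_imp_word_eqv J w(1) assms(1) by blast
    then show ?thesis using w(2) u(1) word_class_eq by (metis image_eqI)
  qed
  moreover have "word_class d k w \<in> L_set d k \<Gamma> \<Omega> \<rho> \<tau>" if w: "w \<in> words_over ?J" for w
  proof -
    have "w \<in> words d" using w J by blast
    then show ?thesis
      using subset_act_word_words_over[OF w assms] act_word_class[OF _ assms(1)]
      unfolding L_set_def carrier_G_dk by auto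
  qed
  ultimately show ?thesis using K_sub_eq[of ?J d k] by auto
qed

end

theorem lemma5:
  fixes d k :: nat and \<Gamma> :: "vert \<Rightarrow> nat"
    and \<Omega> :: "vert set \<Rightarrow> int \<Rightarrow> vert set \<Rightarrow> vert set"
  assumes "1 \<le> d" and "1 \<le> k"
    and "coloring d k \<Gamma>" and "k_ordering d k \<Omega>"
    and "\<tau> \<in> dcells d k" and "\<rho> \<in> cells d k" and "\<rho> \<subseteq> \<tau>"
  shows "L_set d k \<Gamma> \<Omega> \<rho> \<tau> = K_sub d k ({0..d} - \<Gamma> ` \<rho>)"
proof -
  interpret arboreal_action d k \<Gamma> \<Omega> using assms(2-4) by unfold_locales
  show ?thesis using L_set_eq_K_sub[OF assms(5,7)] .
qed

end
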